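(* Let $\mathcal{T}$ be a tangle of order $k$ in a connectivity system $(E,\lambda)$, and let $\mathcal{S}$ be a tree compatible set. Let $\Phi=(P_1,\ldots, P_n)$ be a $k$-flower in $\mathcal{T}$ of $\mathcal{S}$-order at least two with no $\mathcal{T}$-loose petals. If $X\subseteq E-P_1$ is a non-empty $\mathcal{T}$-weak set such that $P_1\cup X$ is $k$-separating, then: (i) $\Phi '=(P_1\cup X, P_2-X,\ldots, P_n-X)$ is a $k$-flower in $\mathcal{T}$ that is $\mathcal{T}$-equivalent to $\Phi$ with respect to $\mathcal{S}$; (ii) $\mathrm{fcl}_{\mathcal{T}}(P_1)=\mathrm{fcl}_{\mathcal{T}}(P_1\cup X)$ and $\mathrm{fcl}_{\mathcal{T}}(P_i-X)=\mathrm{fcl}_{\mathcal{T}}(P_i)$ for all $i\in \{2,\dots,n\}$.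
   Context: A connectivity system is a pair $(E,\lambda)$ with $E$ finite and $\lambda$ an integer-valued symmetric submodular function on subsets of $E$. $X$ is $k$-separating if $\lambda(X)\le k$; a $k$-separation is an unordered partition $(X,E-X)$ with $\lambda(X)\le k$. A tangle of order $k$ is a collection $\mathcal T$ of subsets of $E$ with (T1) $\lambda(A)<k$ for $A\in\mathcal T$; (T2) if $\lambda(A)\le k-1$ then $A$ or $E-A$ is in $\mathcal T$; (T3) $A\cup B\cup C\ne E$ for $A,B,C\in\mathcal T$; (T4) $E-\{e\}\notin\mathcal T$. A set is $\mathcal T$-weak if contained in a member of $\mathcal T$, otherwise $\mathcal T$-strong; partitions/$k$-separations are $\mathcal T$-strong if all parts are. A $\mathcal T$-strong $k$-separating $X$ is fully closed if $X\cup Y$ is not $k$-separating for every nonempty $\mathcal T$-weak $Y\subseteq E-X$; $\mathrm{fcl}_{\mathcal T}(X)$ is the intersection of all fully closed $k$-separating sets containing $X$. $\mathcal T$-strong $k$-separations $(X,Y),(X',Y')$ are $\mathcal T$-equivalent if $\{\mathrm{fcl}_{\mathcal T}(X),\mathrm{fcl}_{\mathcal T}(Y)\}=\{\mathrm{fcl}_{\mathcal T}(X'),\mathrm{fcl}_{\mathcal T}(Y')\}$. $X$ is $\mathcal T$-sequential if it is $k$-separating, $E-X$ is $\mathcal T$-strong and $\mathrm{fcl}_{\mathcal T}(E-X)=E$. Let $\mathcal S$ be a set of non-$\mathcal T$-sequential $k$-separating sets with $\mathcal T$-strong complements; a $(k,\mathcal S)$-separation is a $k$-separation $(X,E-X)$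 with $X,E-X\in\mathcal S$. $\mathcal S$ is tree compatible if (S1) any $\mathcal T$-strong $k$-separation $\mathcal T$-equivalent to a $(k,\mathcal S)$-separation is a $(k,\mathcal S)$-separation, and (S2) if $X\in\mathcal S$ and $(Y,E-Y)$ is a $\mathcal T$-strong $k$-separation with $X\subseteq Y$ then $Y\in\mathcal S$. A $k$-flower in $\mathcal T$ is a $\mathcal T$-strong partition $(P_1,\dots,P_n)$ of $E$ with $P_i$ and $P_i\cup P_{i+1}$ $k$-separating for all $i$ (mod $n$); it displays $(X,E-X)$ if $X$ is a union of petals. $\Phi_1\preccurlyeq_{\mathcal S}\Phi_2$ if each $(k,\mathcal S)$-separation displayed by $\Phi_1$ is $\mathcal T$-equivalent to one displayed by $\Phi_2$; $\mathcal T$-equivalence with respect to $\mathcal S$ means both directions hold. The $\mathcal S$-order of $\Phi$ is the minimum number of petals of a $k$-flower equivalent to $\Phi$. A $k$-flower is a $k$-anemone if every nonempty union of petals is $k$-separating. For $n\ge2$, a petal $P_i$ is $\mathcal T$-loose if $P_i\subseteq\mathrm{fcl}_{\mathcal T}(P_j)$ for some petal $P_j\ne P_i$ that is consecutive to $P_i$ in the cyclic order (for a $k$-anemone, any other petal). *)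

theory Defs
  imports Main
begin

definition connectivity_system :: "'a set \<Rightarrow> ('a set \<Rightarrow> int) \<Rightarrow> bool" where
  "connectivity_system E lam \<longleftrightarrow> finite E
     \<and> (\<forall>X. X \<subseteq> E \<longrightarrow> lam X = lam (E - X))
     \<and> (\<forall>X Y. X \<subseteq> E \<longrightarrow> Y \<subseteq> E \<longrightarrow> lam (X \<union> Y) + lam (X \<inter> Y) \<le> lam X + lam Y)"

definition k_separating :: "'a set \<Rightarrow> ('a set \<Rightarrow> int) \<Rightarrow> int \<Rightarrow> 'a set \<Rightarrow> bool" where
  "k_separating E lam k X \<longleftrightarrow> X \<subseteq> E \<and> lam X \<le> k"

definition tangle :: "'a set \<Rightarrow> ('a set \<Rightarrow> int) \<Rightarrow> int \<Rightarrow> 'a set set \<Rightarrow> bool" where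
  "tangle E lam k T \<longleftrightarrow>
     (\<forall>A\<in>T. A \<subseteq> E \<and> lam A < k)
     \<and> (\<forall>A. A \<subseteq> E \<longrightarrow> lam A \<le> k - 1 \<longrightarrow> A \<in> T \<or> E - A \<in> T)
     \<and> (\<forall>A\<in>T. \<forall>B\<in>T. \<forall>C\<in>T. A \<union> B \<union> C \<noteq> E)
     \<and> (\<forall>e\<in>E. E - {e} \<notin> T)"

definition T_weak :: "'a set set \<Rightarrow> 'a set \<Rightarrow> bool" where
  "T_weak T X \<longleftrightarrow> (\<exists>A\<in>T. X \<subseteq> A)"

definition T_strong :: "'a set set \<Rightarrow> 'a set \<Rightarrow> bool" where
  "T_strong T X \<longleftrightarrow> \<not> T_weak T X"

text \<open>A T-strong k-separation (X, E - X), represented by one of its sides X.\<close>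
definition strong_ksep :: "'a set \<Rightarrow> ('a set \<Rightarrow> int) \<Rightarrow> int \<Rightarrow> 'a set set \<Rightarrow> 'a set \<Rightarrow> bool" where
  "strong_ksep E lam k T X \<longleftrightarrow> k_separating E lam k X \<and> T_strong T X \<and> T_strong T (E - X)"

definition fully_closed :: "'a set \<Rightarrow> ('a set \<Rightarrow> int) \<Rightarrow> int \<Rightarrow> 'a set set \<Rightarrow> 'a set \<Rightarrow> bool" where
  "fully_closed E lam k T X \<longleftrightarrow> T_strong T X \<and> k_separating E lam k X
     \<and> (\<forall>Y. Y \<subseteq> E - X \<longrightarrow> Y \<noteq> {} \<longrightarrow> T_weak T Y \<longrightarrow> \<not> k_separating E lam k (X \<union> Y))"

definition fcl :: "'a set \<Rightarrow> ('a set \<Rightarrow> int) \<Rightarrow> int \<Rightarrow> 'a set set \<Rightarrow> 'a set \<Rightarrow> 'a set" where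
  "fcl E lam k T X = E \<inter> \<Inter> {Z. fully_closed E lam k T Z \<and> X \<subseteq> Z}"

definition T_equiv_sep :: "'a set \<Rightarrow> ('a set \<Rightarrow> int) \<Rightarrow> int \<Rightarrow> 'a set set \<Rightarrow> 'a set \<Rightarrow> 'a set \<Rightarrow> bool" where
  "T_equiv_sep E lam k T X X' \<longleftrightarrow> strong_ksep E lam k T X \<and> strong_ksep E lam k T X'
     \<and> {fcl E lam k T X, fcl E lam k T (E - X)} = {fcl E lam k T X', fcl E lam k T (E - X')}"

definition T_sequential :: "'a set \<Rightarrow> ('a set \<Rightarrow> int) \<Rightarrow> int \<Rightarrow> 'a set set \<Rightarrow> 'a set \<Rightarrow> bool" where
  "T_sequential E lam k T X \<longleftrightarrow> k_separating E lam k X \<and> T_strong T (E - X)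
     \<and> fcl E lam k T (E - X) = E"

definition kS_sep :: "'a set \<Rightarrow> ('a set \<Rightarrow> int) \<Rightarrow> int \<Rightarrow> 'a set set \<Rightarrow> 'a set \<Rightarrow> bool" where
  "kS_sep E lam k S X \<longleftrightarrow> k_separating E lam k X \<and> X \<in> S \<and> E - X \<in> S"

definition tree_compatible :: "'a set \<Rightarrow> ('a set \<Rightarrow> int) \<Rightarrow> int \<Rightarrow> 'a set set \<Rightarrow> 'a set set \<Rightarrow> bool" where
  "tree_compatible E lam k T S \<longleftrightarrow>
     (\<forall>X\<in>S. k_separating E lam k X \<and> T_strong T (E - X) \<and> \<not> T_sequential E lam k T X)
     \<and> (\<forall>X X'. strong_ksep E lam k T X \<longrightarrow> kS_sep E lam k S X' \<longrightarrow> T_equiv_sep E lam k T X X'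
           \<longrightarrow> kS_sep E lam k S X)
     \<and> (\<forall>X Y. X \<in> S \<longrightarrow> strong_ksep E lam k T Y \<longrightarrow> X \<subseteq> Y \<longrightarrow> Y \<in> S)"

text \<open>A flower (P_1,...,P_n) is a list; petal P_(i+1) is \<open>Ps ! i\<close>, indices taken mod n.\<close>
definition k_flower :: "'a set \<Rightarrow> ('a set \<Rightarrow> int) \<Rightarrow> int \<Rightarrow> 'a set set \<Rightarrow> 'a set list \<Rightarrow> bool" where
  "k_flower E lam k T Ps \<longleftrightarrow> (let n = length Ps in
       (\<Union>i<n. Ps ! i) = E
     \<and> (\<forall>i<n. \<forall>j<n. i \<noteq> j \<longrightarrow> Ps ! i \<inter> Ps ! j = {})
     \<and> (\<forall>i<n. Ps ! i \<noteq> {} \<and> T_strong T (Ps ! i))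
     \<and> (\<forall>i<n. k_separating E lam k (Ps ! i)
             \<and> k_separating E lam k (Ps ! i \<union> Ps ! ((i + 1) mod n))))"

definition displays :: "'a set list \<Rightarrow> 'a set \<Rightarrow> bool" where
  "displays Ps X \<longleftrightarrow> (\<exists>I \<subseteq> {..<length Ps}. X = (\<Union>i\<in>I. Ps ! i))"

definition flower_le_S :: "'a set \<Rightarrow> ('a set \<Rightarrow> int) \<Rightarrow> int \<Rightarrow> 'a set set \<Rightarrow> 'a set set
    \<Rightarrow> 'a set list \<Rightarrow> 'a set list \<Rightarrow> bool" where
  "flower_le_S E lam k T S Ps Qs \<longleftrightarrow>
     (\<forall>X. kS_sep E lam k S X \<longrightarrow> displays Ps X \<longrightarrow>
        (\<exists>Y. kS_sep E lam k S Y \<and> displays Qs Y \<and> T_equiv_sep E lam k T X Y))"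

definition flower_equiv_S :: "'a set \<Rightarrow> ('a set \<Rightarrow> int) \<Rightarrow> int \<Rightarrow> 'a set set \<Rightarrow> 'a set set
    \<Rightarrow> 'a set list \<Rightarrow> 'a set list \<Rightarrow> bool" where
  "flower_equiv_S E lam k T S Ps Qs \<longleftrightarrow>
     flower_le_S E lam k T S Ps Qs \<and> flower_le_S E lam k T S Qs Ps"

definition S_order :: "'a set \<Rightarrow> ('a set \<Rightarrow> int) \<Rightarrow> int \<Rightarrow> 'a set set \<Rightarrow> 'a set set
    \<Rightarrow> 'a set list \<Rightarrow> nat" where
  "S_order E lam k T S Ps =
     (LEAST m. \<exists>Qs. k_flower E lam k T Qs \<and> flower_equiv_S E lam k T S Qs Ps \<and> length Qs = m)"

definition k_anemone :: "'a set \<Rightarrow> ('a set \<Rightarrow> int) \<Rightarrow> int \<Rightarrow> 'a set set \<Rightarrow> 'a set list \<Rightarrow> bool" where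
  "k_anemone E lam k T Ps \<longleftrightarrow> k_flower E lam k T Ps
     \<and> (\<forall>I \<subseteq> {..<length Ps}. (\<Union>i\<in>I. Ps ! i) \<noteq> {} \<longrightarrow> k_separating E lam k (\<Union>i\<in>I. Ps ! i))"

definition consecutive :: "nat \<Rightarrow> nat \<Rightarrow> nat \<Rightarrow> bool" where
  "consecutive n i j \<longleftrightarrow> j = (i + 1) mod n \<or> i = (j + 1) mod n"

text \<open>Petal i (0-based) is T-loose (only meaningful for n \<ge> 2).\<close>
definition T_loose :: "'a set \<Rightarrow> ('a set \<Rightarrow> int) \<Rightarrow> int \<Rightarrow> 'a set set \<Rightarrow> 'a set list \<Rightarrow> nat \<Rightarrow> bool" where
  "T_loose E lam k T Ps i \<longleftrightarrow> 2 \<le> length Ps \<and> i < length Ps \<and>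
     (\<exists>j<length Ps. j \<noteq> i \<and> (consecutive (length Ps) i j \<or> k_anemone E lam k T Ps)
        \<and> Ps ! i \<subseteq> fcl E lam k T (Ps ! j))"

end

theory Submission
  imports Defs
begin

text \<open>
  The argument is uncrossing.  By submodularity and the tangle axiom, the union of two
  \<open>k\<close>-separating sets whose intersection is a \<open>\<T>\<close>-strong side of a \<open>\<T>\<close>-strong
  separation is again \<open>k\<close>-separating.  Hence a fully closed set containing a strong part
  \<open>C\<close> of a \<open>k\<close>-separating set \<open>A\<close> with \<open>A - C\<close> weak contains all of \<open>A\<close>, so adding or
  removing the weak set \<open>X\<close> never changes a full closure, and a union of petals is
  \<open>k\<close>-separating before \<open>X\<close> is moved into \<open>P\<^sub>1\<close> if and only if it is afterwards.
  The one delicate point is that every \<open>P\<^sub>i - X\<close> (\<open>i \<ge> 2\<close>) stays strong: for the last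
  petal in the cyclic order with \<open>P\<^sub>i - X\<close> weak, the same absorption shows that \<open>P\<^sub>i\<close> lies
  in the full closure of its successor, so \<open>P\<^sub>i\<close> would be loose.
\<close>

abbreviation petal_union :: "'a set list \<Rightarrow> nat set \<Rightarrow> 'a set" where
  "petal_union Fs I \<equiv> \<Union>i\<in>I. Fs ! i"

definition move_into_first_petal :: "'a set list \<Rightarrow> 'a set \<Rightarrow> 'a set list" where
  "move_into_first_petal Ps X = (Ps ! 0 \<union> X) # map (\<lambda>P. P - X) (tl Ps)"

lemma T_weak_subset: "T_weak T B \<Longrightarrow> A \<subseteq> B \<Longrightarrow> T_weak T A"
  unfolding T_weak_def by blast

lemma T_strong_superset: "T_strong T A \<Longrightarrow> A \<subseteq> B \<Longrightarrow> T_strong T B"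
  unfolding T_strong_def T_weak_def by blast

lemma T_strong_nonempty: "T_weak T W \<Longrightarrow> T_strong T A \<Longrightarrow> A \<noteq> {}"
  unfolding T_strong_def T_weak_def by blast

lemma subset_fclI:
  assumes "A \<subseteq> E" and "\<And>Z. fully_closed E lam k T Z \<Longrightarrow> B \<subseteq> Z \<Longrightarrow> A \<subseteq> Z"
  shows "A \<subseteq> fcl E lam k T B"
  using assms unfolding fcl_def by blast

lemma fcl_eqI:
  assumes "\<And>Z. fully_closed E lam k T Z \<Longrightarrow> A \<subseteq> Z \<longleftrightarrow> B \<subseteq> Z"
  shows "fcl E lam k T A = fcl E lam k T B"
  unfolding fcl_def using assms by (metis (mono_tags, lifting))

lemma k_flower_petal:
  assumes "k_flower E lam k T Fs" and "i < length Fs"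
  shows "Fs ! i \<subseteq> E" "Fs ! i \<noteq> {}" "T_strong T (Fs ! i)" "lam (Fs ! i) \<le> k"
  using assms unfolding k_flower_def Let_def k_separating_def by auto

lemma k_flower_consecutive:
  "k_flower E lam k T Fs \<Longrightarrow> i < length Fs \<Longrightarrow> lam (Fs ! i \<union> Fs ! ((i + 1) mod length Fs)) \<le> k"
  unfolding k_flower_def Let_def k_separating_def by auto

lemma k_flower_disjoint:
  "k_flower E lam k T Fs \<Longrightarrow> i < length Fs \<Longrightarrow> j < length Fs \<Longrightarrow> i \<noteq> j \<Longrightarrow> Fs ! i \<inter> Fs ! j = {}"
  unfolding k_flower_def Let_def by auto

lemma k_flower_union: "k_flower E lam k T Fs \<Longrightarrow> petal_union Fs {..<length Fs} = E"
  unfolding k_flower_def Let_def by auto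

lemma k_flower_union_compl:
  assumes "k_flower E lam k T Fs" and "I \<subseteq> {..<length Fs}"
  shows "E - petal_union Fs I = petal_union Fs ({..<length Fs} - I)"
  using k_flower_union[OF assms(1)] k_flower_disjoint[OF assms(1)] assms(2) by blast

lemma k_flower_union_subset: "k_flower E lam k T Fs \<Longrightarrow> I \<subseteq> {..<length Fs} \<Longrightarrow> petal_union Fs I \<subseteq> E"
  using k_flower_petal(1) by blast

lemma k_flower_union_strong:
  assumes "k_flower E lam k T Fs" and "I \<subseteq> {..<length Fs}" and "I \<noteq> {}"
  shows "T_strong T (petal_union Fs I)"
proof -
  obtain m where m: "m \<in> I" using assms(3) by blast
  then have "T_strong T (Fs ! m)" using assms(1,2) k_flower_petal(3) by blast
  then show ?thesis by (rule T_strong_superset) (use m in blast)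
qed

section \<open>Uncrossing in a tangle\<close>

locale connectivity_tangle =
  fixes E :: "'a set" and lam :: "'a set \<Rightarrow> int" and k :: int and T :: "'a set set"
  assumes connectivity: "connectivity_system E lam"
    and tangle: "tangle E lam k T"
begin

lemma lam_compl: "A \<subseteq> E \<Longrightarrow> lam (E - A) = lam A"
  using connectivity unfolding connectivity_system_def by (metis (no_types))

lemma lam_submodular: "A \<subseteq> E \<Longrightarrow> B \<subseteq> E \<Longrightarrow> lam (A \<union> B) + lam (A \<inter> B) \<le> lam A + lam B"
  using connectivity unfolding connectivity_system_def by blast

lemma lam_empty_le: "A \<subseteq> E \<Longrightarrow> lam {} \<le> lam A"
  using lam_submodular[of A "E - A"] lam_compl[of A] lam_compl[of E] by (simp add: Int_Diff Un_absorb1)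

lemma lam_ge_if_strong:
  assumes "A \<subseteq> E" and "T_strong T A" and "T_strong T (E - A)"
  shows "k \<le> lam A"
proof (rule ccontr)
  assume "\<not> k \<le> lam A"
  then have "A \<in> T \<or> E - A \<in> T"
    using tangle assms(1) unfolding tangle_def by auto
  then show False
    using assms(2,3) unfolding T_strong_def T_weak_def by blast
qed

lemma lam_union_le:
  assumes "A \<subseteq> E" "B \<subseteq> E" "lam A \<le> k" "lam B \<le> k"
    and "T_strong T (A \<inter> B)" "T_strong T (E - (A \<inter> B))"
  shows "lam (A \<union> B) \<le> k"
proof -
  have "k \<le> lam (A \<inter> B)" using lam_ge_if_strong assms by blast
  then show ?thesis using lam_submodular[of A B] assms by linarith
qed

lemma lam_inter_le:
  assumes "A \<subseteq> E" "B \<subseteq> E" "lam A \<le> k" "lam B \<le> k"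
    and "T_strong T (A \<union> B)" "T_strong T (E - (A \<union> B))"
  shows "lam (A \<inter> B) \<le> k"
proof -
  have "lam ((E - A) \<union> (E - B)) \<le> k"
  proof (rule lam_union_le)
    show "T_strong T ((E - A) \<inter> (E - B))" by (rule T_strong_superset[OF assms(6)]) blast
    show "T_strong T (E - ((E - A) \<inter> (E - B)))"
      by (rule T_strong_superset[OF assms(5)]) (use assms(1,2) in blast)
  qed (use assms lam_compl in auto)
  moreover have "(E - A) \<union> (E - B) = E - (A \<inter> B)" by blast
  moreover have "A \<inter> B \<subseteq> E" using assms(1) by blast
  ultimately show ?thesis using lam_compl[of "A \<inter> B"] by simp
qed

lemma lam_union_family_le:
  assumes "finite K" and "B \<subseteq> E" and "lam B \<le> k"
    and "\<And>m. m \<in> K \<Longrightarrow> A m \<subseteq> E \<and> lam (A m) \<le> k \<and> T_strong T (B \<inter> A m) \<and> T_strong T (E - A m)"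
  shows "lam (B \<union> (\<Union>m\<in>K. A m)) \<le> k"
  using assms(1,4)
proof (induction K rule: finite_induct)
  case empty
  then show ?case using assms(3) by simp
next
  case (insert m K)
  let ?W = "B \<union> (\<Union>m\<in>K. A m)"
  have m: "A m \<subseteq> E" "lam (A m) \<le> k" "T_strong T (B \<inter> A m)" "T_strong T (E - A m)"
    using insert.prems by auto
  have "lam (?W \<union> A m) \<le> k"
  proof (rule lam_union_le)
    show "T_strong T (?W \<inter> A m)" by (rule T_strong_superset[OF m(3)]) auto
    show "T_strong T (E - ?W \<inter> A m)" by (rule T_strong_superset[OF m(4)]) auto
  qed (use insert m assms(2) in auto)
  moreover have "B \<union> (\<Union>m\<in>insert m K. A m) = ?W \<union> A m" by auto
  ultimately show ?case by simp
qed

lemma fully_closed_k_separating: "fully_closed E lam k T Z \<Longrightarrow> Z \<subseteq> E \<and> lam Z \<le> k"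
  unfolding fully_closed_def k_separating_def by auto

lemma fully_closed_compl_strong:
  assumes Z: "fully_closed E lam k T Z" and "Z \<noteq> E"
  shows "T_strong T (E - Z)"
proof (rule ccontr)
  assume "\<not> T_strong T (E - Z)"
  moreover have "E - Z \<noteq> {}" using fully_closed_k_separating[OF Z] \<open>Z \<noteq> E\<close> by auto
  ultimately have "\<not> k_separating E lam k (Z \<union> (E - Z))"
    using Z unfolding fully_closed_def T_strong_def by blast
  moreover have "lam E \<le> k"
    using lam_compl[of E] lam_empty_le[of Z] fully_closed_k_separating[OF Z] by auto
  ultimately show False
    using fully_closed_k_separating[OF Z] unfolding k_separating_def by (simp add: Un_absorb1)
qed

lemma fully_closed_absorb:
  assumes Z: "fully_closed E lam k T Z" and A: "A \<subseteq> E" "lam A \<le> k"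
    and "T_strong T C" "C \<subseteq> Z \<inter> A" and "T_weak T W" "A - Z \<subseteq> W"
  shows "A \<subseteq> Z"
proof (rule ccontr)
  assume not_sub: "\<not> A \<subseteq> Z"
  have Z_sep: "Z \<subseteq> E" "lam Z \<le> k" using fully_closed_k_separating[OF Z] by auto
  have "T_strong T (E - Z)"
    using fully_closed_compl_strong[OF Z] not_sub A by auto
  then have "T_strong T (E - Z \<inter> A)"
    by (rule T_strong_superset) auto
  moreover have "T_strong T (Z \<inter> A)"
    using assms(4,5) by (rule T_strong_superset)
  ultimately have "lam (Z \<union> A) \<le> k"
    using lam_union_le[OF Z_sep(1) A(1) Z_sep(2) A(2)] by simp
  moreover have "\<not> k_separating E lam k (Z \<union> (A - Z))"
  proof -
    have "A - Z \<subseteq> E - Z" "A - Z \<noteq> {}" using A(1) not_sub by auto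
    then show ?thesis using Z T_weak_subset[OF assms(6,7)] unfolding fully_closed_def by blast
  qed
  ultimately show False
    using fully_closed_k_separating[OF Z] A unfolding k_separating_def by simp
qed

lemma fcl_eq_if_diff_weak:
  assumes "A \<subseteq> E" "lam A \<le> k" "C \<subseteq> A" "T_strong T C" "T_weak T (A - C)"
  shows "fcl E lam k T C = fcl E lam k T A"
proof (rule fcl_eqI)
  fix Z assume "fully_closed E lam k T Z"
  then show "C \<subseteq> Z \<longleftrightarrow> A \<subseteq> Z"
    using fully_closed_absorb[of Z A C "A - C"] assms by blast
qed

end

section \<open>Moving a weak set into the first petal\<close>

locale flower_weak_extension = connectivity_tangle +
  fixes Ps :: "'a set list" and X :: "'a set"
  assumes flower: "k_flower E lam k T Ps"
    and two_petals: "2 \<le> length Ps"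
    and no_loose_petal: "\<forall>i<length Ps. \<not> T_loose E lam k T Ps i"
    and X_subset: "X \<subseteq> E - Ps ! 0"
    and X_weak: "T_weak T X"
    and first_petal_union_X: "k_separating E lam k (Ps ! 0 \<union> X)"
begin

abbreviation Qs :: "'a set list" where
  "Qs \<equiv> move_into_first_petal Ps X"

lemmas petal = k_flower_petal[OF flower]

lemma length_pos: "0 < length Ps"
  using two_petals by linarith

lemma first_petal: "Ps ! 0 \<subseteq> E" "T_strong T (Ps ! 0)"
  using petal[OF length_pos] by blast+

lemma petal_disjoint_first: "i < length Ps \<Longrightarrow> i \<noteq> 0 \<Longrightarrow> Ps ! i \<inter> Ps ! 0 = {}"
  using k_flower_disjoint[OF flower _ length_pos] by blast

lemma lam_diff_X_le:
  assumes D: "D \<subseteq> E" "lam D \<le> k" "D \<inter> Ps ! 0 = {}" "T_strong T D"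
  shows "lam (D - X) \<le> k"
proof -
  let ?B = "E - (Ps ! 0 \<union> X)"
  have "lam (D \<inter> ?B) \<le> k"
  proof (rule lam_inter_le)
    show "lam ?B \<le> k"
      using first_petal_union_X lam_compl unfolding k_separating_def by auto
    show "T_strong T (D \<union> ?B)" using D(4) by (rule T_strong_superset) auto
    show "T_strong T (E - (D \<union> ?B))"
      by (rule T_strong_superset[OF first_petal(2)]) (use first_petal D(3) in auto)
  qed (use D in auto)
  moreover have "D \<inter> ?B = D - X" using D(1,3) by auto
  ultimately show ?thesis by simp
qed

lemma petal_in_fcl_next:
  assumes i: "1 \<le> i" "i < length Ps" and weak: "T_weak T (Ps ! i - X)"
    and next_strong: "i + 1 < length Ps \<Longrightarrow> T_strong T (Ps ! (i + 1) - X)"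
  shows "Ps ! i \<subseteq> fcl E lam k T (Ps ! ((i + 1) mod length Ps))"
proof (rule subset_fclI)
  show "Ps ! i \<subseteq> E" using petal i by simp
  fix Z assume Z: "fully_closed E lam k T Z" and next_in_Z: "Ps ! ((i + 1) mod length Ps) \<subseteq> Z"
  show "Ps ! i \<subseteq> Z"
  proof (cases "i + 1 = length Ps")
    case True
    then have "Ps ! 0 \<subseteq> Z" using next_in_Z by simp
    have lam_0X: "lam (Ps ! 0 \<union> X) \<le> k" using first_petal_union_X unfolding k_separating_def by simp
    have "Ps ! 0 \<union> X \<subseteq> Z"
      by (rule fully_closed_absorb[OF Z _ lam_0X first_petal(2) _ X_weak])
        (use first_petal(1) X_subset \<open>Ps ! 0 \<subseteq> Z\<close> in auto)
    moreover have lam_i0: "lam (Ps ! i \<union> Ps ! 0) \<le> k"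
      using k_flower_consecutive[OF flower i(2)] True by simp
    ultimately have "Ps ! i \<union> Ps ! 0 \<subseteq> Z"
      by (intro fully_closed_absorb[OF Z _ lam_i0 first_petal(2) _ weak])
        (use petal(1)[OF i(2)] first_petal(1) in auto)
    then show ?thesis by blast
  next
    case False
    then have next_idx: "(i + 1) mod length Ps = i + 1" "i + 1 < length Ps" using i by auto
    let ?A = "Ps ! i \<union> Ps ! (i + 1)"
    have lam_A: "lam ?A \<le> k" using k_flower_consecutive[OF flower i(2)] next_idx by simp
    have A_E: "?A \<subseteq> E" using petal(1) i(2) next_idx(2) by blast
    have "T_strong T ?A" by (rule T_strong_superset[OF petal(3)[OF i(2)]]) auto
    moreover have "?A \<inter> Ps ! 0 = {}"
      using petal_disjoint_first[of i] petal_disjoint_first[of "i + 1"] i next_idx by auto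
    ultimately have lam_AX: "lam (?A - X) \<le> k"
      using lam_diff_X_le[OF A_E lam_A] by blast
    have "?A - X \<subseteq> Z"
      by (rule fully_closed_absorb[OF Z _ lam_AX next_strong[OF next_idx(2)] _ weak])
        (use A_E next_in_Z next_idx in auto)
    then have "?A \<subseteq> Z"
      by (intro fully_closed_absorb[OF Z A_E lam_A petal(3)[OF next_idx(2)] _ X_weak])
        (use next_in_Z next_idx in auto)
    then show ?thesis by blast
  qed
qed

lemma petal_diff_X_strong:
  assumes "1 \<le> i" and "i < length Ps"
  shows "T_strong T (Ps ! i - X)"
  using assms
proof (induction "length Ps - i" arbitrary: i rule: less_induct)
  case less
  show ?case
  proof (rule ccontr)
    assume "\<not> T_strong T (Ps ! i - X)"
    then have "Ps ! i \<subseteq> fcl E lam k T (Ps ! ((i + 1) mod length Ps))"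
      using petal_in_fcl_next less by (simp add: T_strong_def)
    moreover have "(i + 1) mod length Ps \<noteq> i"
      using less.prems by (cases "i + 1 = length Ps") auto
    moreover have "(i + 1) mod length Ps < length Ps"
      using length_pos by simp
    ultimately have "T_loose E lam k T Ps i"
      unfolding T_loose_def consecutive_def using two_petals less.prems by blast
    then show False using no_loose_petal less.prems by blast
  qed
qed

lemma moved_length: "length Qs = length Ps"
  using two_petals unfolding move_into_first_petal_def by (cases Ps) auto

lemma moved_nth: "i < length Ps \<Longrightarrow> Qs ! i = (if i = 0 then Ps ! 0 \<union> X else Ps ! i - X)"
  using two_petals unfolding move_into_first_petal_def by (cases i; cases Ps) auto

lemma moved_union:
  assumes "I \<subseteq> {..<length Ps}"
  shows "petal_union Qs I = (if 0 \<in> I then petal_union Ps I \<union> X else petal_union Ps I - X)"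
proof -
  have Q0: "Qs ! 0 = Ps ! 0 \<union> X" using moved_nth[OF length_pos] by simp
  have Qi: "Qs ! i = Ps ! i - X" if "i \<in> I" "i \<noteq> 0" for i
    using moved_nth[of i] assms that by auto
  show ?thesis
  proof (cases "0 \<in> I")
    case True
    have "petal_union Ps I \<union> X \<subseteq> petal_union Qs I"
    proof
      fix x assume "x \<in> petal_union Ps I \<union> X"
      then consider "x \<in> X" | i where "i \<in> I" "x \<in> Ps ! i" "x \<notin> X" by blast
      then show "x \<in> petal_union Qs I"
      proof cases
        case 1
        then show ?thesis using True Q0 by blast
      next
        case (2 i)
        then have "x \<in> Qs ! i" using Q0 Qi[of i] by (cases "i = 0") auto
        then show ?thesis using \<open>i \<in> I\<close> by blast
      qed
    qed
    moreover have "petal_union Qs I \<subseteq> petal_union Ps I \<union> X"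
    proof
      fix x assume "x \<in> petal_union Qs I"
      then obtain i where "i \<in> I" "x \<in> Qs ! i" by blast
      then show "x \<in> petal_union Ps I \<union> X" using Q0 Qi[of i] by (cases "i = 0") auto
    qed
    ultimately show ?thesis using True by (simp only: if_True subset_antisym)
  next
    case False
    then have "petal_union Qs I = (\<Union>i\<in>I. Ps ! i - X)"
      using Qi by (intro SUP_cong) auto
    then show ?thesis using False by auto
  qed
qed

lemma moved_petal_strong: "i < length Ps \<Longrightarrow> T_strong T (Qs ! i)"
  using moved_nth[of i] petal_diff_X_strong[of i] T_strong_superset[OF first_petal(2), of "Ps ! 0 \<union> X"]
  by auto

lemma lam_petals_diff_X_le_iff:
  assumes J: "J \<subseteq> {..<length Ps}" "0 \<notin> J" "J \<noteq> {}"
  shows "lam (petal_union Ps J - X) \<le> k \<longleftrightarrow> lam (petal_union Ps J) \<le> k"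
proof
  assume lam_diff: "lam (petal_union Ps J - X) \<le> k"
  have "lam ((petal_union Ps J - X) \<union> petal_union Ps J) \<le> k"
  proof (rule lam_union_family_le)
    show "finite J" using J(1) finite_subset by blast
    fix m assume "m \<in> J"
    then have m: "1 \<le> m" "m < length Ps" using J by (auto simp: Suc_le_eq)
    have "(petal_union Ps J - X) \<inter> Ps ! m = Ps ! m - X" using \<open>m \<in> J\<close> by blast
    moreover have "T_strong T (E - Ps ! m)"
      by (rule T_strong_superset[OF first_petal(2)])
        (use first_petal petal_disjoint_first[OF m(2)] m in auto)
    ultimately show "Ps ! m \<subseteq> E \<and> lam (Ps ! m) \<le> k \<and> T_strong T ((petal_union Ps J - X) \<inter> Ps ! m)
        \<and> T_strong T (E - Ps ! m)"
      using petal[OF m(2)] petal_diff_X_strong[OF m] by simp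
  qed (use lam_diff k_flower_union_subset[OF flower J(1)] in auto)
  then show "lam (petal_union Ps J) \<le> k" by (simp add: Un_absorb1)
next
  assume lam_J: "lam (petal_union Ps J) \<le> k"
  have "Ps ! i \<inter> Ps ! 0 = {}" if "i \<in> J" for i
    using petal_disjoint_first that J by auto
  then have "petal_union Ps J \<inter> Ps ! 0 = {}" by blast
  then show "lam (petal_union Ps J - X) \<le> k"
    using lam_diff_X_le[OF k_flower_union_subset[OF flower J(1)] lam_J]
      k_flower_union_strong[OF flower J(1,3)] by blast
qed

lemma moved_union_subset: "I \<subseteq> {..<length Ps} \<Longrightarrow> petal_union Qs I \<subseteq> E"
  using moved_union[of I] k_flower_union_subset[OF flower, of I] X_subset by auto

lemma lam_moved_union_le_iff:
  assumes I: "I \<subseteq> {..<length Ps}"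
  shows "lam (petal_union Qs I) \<le> k \<longleftrightarrow> lam (petal_union Ps I) \<le> k"
proof (cases "0 \<in> I")
  case False
  then show ?thesis
    using moved_union[OF I] lam_petals_diff_X_le_iff[OF I] by (cases "I = {}") auto
next
  case True
  define J where "J = {..<length Ps} - I"
  have J: "J \<subseteq> {..<length Ps}" "0 \<notin> J" using True J_def by auto
  have compl_P: "E - petal_union Ps I = petal_union Ps J"
    using k_flower_union_compl[OF flower I] J_def by simp
  have compl_Q: "E - petal_union Qs I = petal_union Ps J - X"
    using moved_union[OF I] True compl_P by auto
  show ?thesis
  proof (cases "J = {}")
    case True
    then have "petal_union Ps I = E" "petal_union Qs I = E"
      using compl_P compl_Q k_flower_union_subset[OF flower I] moved_union_subset[OF I] by auto
    then show ?thesis by simp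
  next
    case False
    have "lam (petal_union Qs I) = lam (petal_union Ps J - X)"
      using lam_compl[OF moved_union_subset[OF I]] compl_Q by simp
    moreover have "lam (petal_union Ps I) = lam (petal_union Ps J)"
      using lam_compl[OF k_flower_union_subset[OF flower I]] compl_P by simp
    ultimately show ?thesis using lam_petals_diff_X_le_iff[OF J False] by simp
  qed
qed

lemma moved_flower: "k_flower E lam k T Qs"
  unfolding k_flower_def Let_def moved_length
proof (intro conjI allI impI)
  show "petal_union Qs {..<length Ps} = E"
    using moved_union[of "{..<length Ps}"] k_flower_union[OF flower] X_subset two_petals by auto
  fix i assume i: "i < length Ps"
  show "T_strong T (Qs ! i)" using moved_petal_strong[OF i] .
  then show "Qs ! i \<noteq> {}" using T_strong_nonempty[OF X_weak] by blast
  show "k_separating E lam k (Qs ! i)"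
    using lam_moved_union_le_iff[of "{i}"] moved_union_subset[of "{i}"] petal[OF i] i
    unfolding k_separating_def by auto
  let ?j = "(i + 1) mod length Ps"
  have "?j < length Ps" using length_pos by simp
  then show "k_separating E lam k (Qs ! i \<union> Qs ! ?j)"
    using lam_moved_union_le_iff[of "{i, ?j}"] moved_union_subset[of "{i, ?j}"]
      k_flower_consecutive[OF flower i] i
    unfolding k_separating_def by auto
  fix j assume "j < length Ps" "i \<noteq> j"
  then show "Qs ! i \<inter> Qs ! j = {}"
    using moved_nth[of i] moved_nth[of j] k_flower_disjoint[OF flower i] X_subset i by auto
qed

lemma fcl_moved_union:
  assumes I: "I \<subseteq> {..<length Ps}" "I \<noteq> {}" and lam_I: "lam (petal_union Ps I) \<le> k"
  shows "fcl E lam k T (petal_union Qs I) = fcl E lam k T (petal_union Ps I)"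
proof (cases "0 \<in> I")
  case True
  then have Q: "petal_union Qs I = petal_union Ps I \<union> X" using moved_union[OF I(1)] by simp
  have "fcl E lam k T (petal_union Ps I) = fcl E lam k T (petal_union Ps I \<union> X)"
  proof (rule fcl_eq_if_diff_weak)
    show "lam (petal_union Ps I \<union> X) \<le> k" using lam_moved_union_le_iff[OF I(1)] lam_I Q by simp
    show "T_strong T (petal_union Ps I)" using k_flower_union_strong[OF flower I] .
    show "T_weak T (petal_union Ps I \<union> X - petal_union Ps I)"
      using X_weak by (rule T_weak_subset) auto
  qed (use k_flower_union_subset[OF flower I(1)] X_subset in auto)
  then show ?thesis using Q by simp
next
  case False
  then have Q: "petal_union Qs I = petal_union Ps I - X" using moved_union[OF I(1)] by simp
  have "fcl E lam k T (petal_union Ps I - X) = fcl E lam k T (petal_union Ps I)"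
  proof (rule fcl_eq_if_diff_weak)
    show "T_strong T (petal_union Ps I - X)"
      using Q k_flower_union_strong[OF moved_flower, of I] I moved_length by simp
    show "T_weak T (petal_union Ps I - (petal_union Ps I - X))"
      using X_weak by (rule T_weak_subset) auto
  qed (use k_flower_union_subset[OF flower I(1)] lam_I in auto)
  then show ?thesis using Q by simp
qed

lemma fcl_moved_petal: "i < length Ps \<Longrightarrow> fcl E lam k T (Qs ! i) = fcl E lam k T (Ps ! i)"
  using fcl_moved_union[of "{i}"] petal by simp

lemma moved_union_T_equiv:
  assumes I: "I \<subseteq> {..<length Ps}"
    and sep: "strong_ksep E lam k T (petal_union Ps I) \<or> strong_ksep E lam k T (petal_union Qs I)"
  shows "T_equiv_sep E lam k T (petal_union Ps I) (petal_union Qs I)"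
proof -
  define J where "J = {..<length Ps} - I"
  have J: "J \<subseteq> {..<length Ps}" using J_def by simp
  have compl_P: "E - petal_union Ps I = petal_union Ps J"
    using k_flower_union_compl[OF flower I] J_def by simp
  have compl_Q: "E - petal_union Qs I = petal_union Qs J"
    using k_flower_union_compl[OF moved_flower] I J_def moved_length by simp
  have "T_strong T (petal_union Ps I) \<and> T_strong T (petal_union Ps J)
      \<or> T_strong T (petal_union Qs I) \<and> T_strong T (petal_union Qs J)"
    using sep unfolding strong_ksep_def compl_P compl_Q by blast
  then have nonempty: "I \<noteq> {}" "J \<noteq> {}"
    using T_strong_nonempty[OF X_weak] by fastforce+
  have lam_I: "lam (petal_union Ps I) \<le> k" "lam (petal_union Qs I) \<le> k"
    using sep lam_moved_union_le_iff[OF I] unfolding strong_ksep_def k_separating_def by auto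
  have lam_J: "lam (petal_union Ps J) \<le> k"
    using lam_I lam_compl[OF k_flower_union_subset[OF flower I]] compl_P by simp
  have strong_P: "T_strong T (petal_union Ps I)" "T_strong T (petal_union Ps J)"
    using k_flower_union_strong[OF flower I nonempty(1)] k_flower_union_strong[OF flower J nonempty(2)] .
  have strong_Q: "T_strong T (petal_union Qs I)" "T_strong T (petal_union Qs J)"
    using k_flower_union_strong[OF moved_flower, of I] k_flower_union_strong[OF moved_flower, of J]
      I J nonempty moved_length by simp_all
  have "strong_ksep E lam k T (petal_union Ps I)" "strong_ksep E lam k T (petal_union Qs I)"
    unfolding strong_ksep_def k_separating_def compl_P compl_Q
    using lam_I strong_P strong_Q k_flower_union_subset[OF flower I] moved_union_subset[OF I]
    by simp_all
  moreover have "fcl E lam k T (petal_union Qs I) = fcl E lam k T (petal_union Ps I)"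
    using fcl_moved_union I nonempty lam_I by blast
  moreover have "fcl E lam k T (petal_union Qs J) = fcl E lam k T (petal_union Ps J)"
    using fcl_moved_union J nonempty lam_J by blast
  ultimately show ?thesis
    unfolding T_equiv_sep_def compl_P compl_Q by simp
qed

end

section \<open>Equivalence of flowers with respect to a tree compatible set\<close>

lemma kS_sep_imp_strong_ksep:
  assumes "tree_compatible E lam k T S" and "kS_sep E lam k S A"
  shows "strong_ksep E lam k T A"
proof -
  have A: "A \<subseteq> E" "lam A \<le> k" "A \<in> S" "E - A \<in> S"
    using assms(2) unfolding kS_sep_def k_separating_def by auto
  have "T_strong T (E - A)" "T_strong T (E - (E - A))"
    using assms(1) A(3,4) unfolding tree_compatible_def by blast+
  moreover have "E - (E - A) = A" using A(1) by blast
  ultimately show ?thesis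
    using A unfolding strong_ksep_def k_separating_def by simp
qed

lemma tree_compatible_kS_sep_equiv:
  "tree_compatible E lam k T S \<Longrightarrow> kS_sep E lam k S B \<Longrightarrow> T_equiv_sep E lam k T A B
    \<Longrightarrow> kS_sep E lam k S A"
  unfolding tree_compatible_def T_equiv_sep_def by blast

lemma T_equiv_sep_sym: "T_equiv_sep E lam k T A B \<Longrightarrow> T_equiv_sep E lam k T B A"
  unfolding T_equiv_sep_def by auto

lemma S_order_le_length:
  assumes "tree_compatible E lam k T S" and "k_flower E lam k T Ps"
  shows "S_order E lam k T S Ps \<le> length Ps"
proof -
  have "flower_le_S E lam k T S Ps Ps"
    unfolding flower_le_S_def T_equiv_sep_def using kS_sep_imp_strong_ksep[OF assms(1)] by blast
  then show ?thesis
    unfolding S_order_def using assms(2) by (intro Least_le) (auto simp: flower_equiv_S_def)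
qed

lemma flower_le_S_if_unions_equiv:
  assumes tc: "tree_compatible E lam k T S" and len: "length Qs = length Ps"
    and equiv: "\<And>I. I \<subseteq> {..<length Ps} \<Longrightarrow> strong_ksep E lam k T (petal_union Ps I)
      \<Longrightarrow> T_equiv_sep E lam k T (petal_union Ps I) (petal_union Qs I)"
  shows "flower_le_S E lam k T S Ps Qs"
  unfolding flower_le_S_def
proof (intro allI impI)
  fix A assume A: "kS_sep E lam k S A" and "displays Ps A"
  then obtain I where I: "I \<subseteq> {..<length Ps}" and A_eq: "A = petal_union Ps I"
    unfolding displays_def by blast
  have equiv_A: "T_equiv_sep E lam k T A (petal_union Qs I)"
    using equiv[OF I] kS_sep_imp_strong_ksep[OF tc A] A_eq by simp
  then have "kS_sep E lam k S (petal_union Qs I)"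
    using tree_compatible_kS_sep_equiv[OF tc A] T_equiv_sep_sym by blast
  moreover have "displays Qs (petal_union Qs I)"
    unfolding displays_def using I len by auto
  ultimately show "\<exists>Y. kS_sep E lam k S Y \<and> displays Qs Y \<and> T_equiv_sep E lam k T A Y"
    using equiv_A by blast
qed

theorem lemma4p6:
  fixes E :: "'a set" and lam :: "'a set \<Rightarrow> int" and k :: int
    and T S :: "'a set set" and Ps :: "'a set list" and X :: "'a set"
  assumes "connectivity_system E lam"
    and "tangle E lam k T"
    and "tree_compatible E lam k T S"
    and "k_flower E lam k T Ps"
    and "S_order E lam k T S Ps \<ge> 2"
    and "\<forall>i<length Ps. \<not> T_loose E lam k T Ps i"
    and "X \<subseteq> E - Ps ! 0" and "X \<noteq> {}" and "T_weak T X"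
    and "k_separating E lam k (Ps ! 0 \<union> X)"
  shows "k_flower E lam k T ((Ps ! 0 \<union> X) # map (\<lambda>P. P - X) (tl Ps))
       \<and> flower_equiv_S E lam k T S ((Ps ! 0 \<union> X) # map (\<lambda>P. P - X) (tl Ps)) Ps
       \<and> fcl E lam k T (Ps ! 0) = fcl E lam k T (Ps ! 0 \<union> X)
       \<and> (\<forall>i. 1 \<le> i \<and> i < length Ps \<longrightarrow> fcl E lam k T (Ps ! i - X) = fcl E lam k T (Ps ! i))"
proof -
  have "2 \<le> length Ps"
    using S_order_le_length[OF assms(3,4)] assms(5) by simp
  then interpret flower_weak_extension E lam k T Ps X
    using assms by unfold_locales auto
  have "flower_le_S E lam k T S Ps Qs"
    by (rule flower_le_S_if_unions_equiv[OF assms(3) moved_length]) (use moved_union_T_equiv in blast)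
  moreover have "flower_le_S E lam k T S Qs Ps"
    by (rule flower_le_S_if_unions_equiv[OF assms(3) moved_length[symmetric]])
      (use moved_union_T_equiv T_equiv_sep_sym moved_length in metis)
  moreover have "fcl E lam k T (Ps ! 0) = fcl E lam k T (Ps ! 0 \<union> X)"
    using fcl_moved_petal[OF length_pos] moved_nth[OF length_pos] by simp
  moreover have "fcl E lam k T (Ps ! i - X) = fcl E lam k T (Ps ! i)" if "1 \<le> i" "i < length Ps" for i
    using fcl_moved_petal[of i] moved_nth[of i] that by simp
  ultimately show ?thesis
    using moved_flower unfolding flower_equiv_S_def move_into_first_petal_def by blast
qed

end
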